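(* For real $r \ge 2$, \[ \frac{1}{2(r+1)} < \log \rho\bigl(N(0,1), t_r\bigr) < \frac{1}{2r} . \]
   Context: $t_r$ is Student's t distribution with $r>0$ degrees of freedom, with density $f_r(x) = \frac{\Gamma((r+1)/2)}{\Gamma(r/2)\sqrt{r\pi}} (1 + x^2/r)^{-(r+1)/2}$; $N(0,1)$ is the standard Gaussian distribution. For probability measures $Q,P$ on $(\mathcal{X},\mathcal{A})$, $\rho(Q,P) := \sup_{A \in \mathcal{A}} Q(A)/P(A)$ with conventions $0/0 := 0$, $a/0 := \infty$ for $a>0$. *)

theory Defs
  imports "HOL-Probability.Probability"
begin

definition student_t_density :: "real \<Rightarrow> real \<Rightarrow> real" where
  "student_t_density r x =
     Gamma ((r + 1) / 2) / (Gamma (r / 2) * sqrt (r * pi)) * (1 + x\<^sup>2 / r) powr (-(r + 1) / 2)"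

definition student_t :: "real \<Rightarrow> real measure" where
  "student_t r = density lborel (\<lambda>x. ennreal (student_t_density r x))"

definition std_normal :: "real measure" where
  "std_normal = density lborel (\<lambda>x. ennreal (std_normal_density x))"

definition rho :: "'a measure \<Rightarrow> 'a measure \<Rightarrow> ennreal" where
  "rho Q P = (SUP A \<in> sets Q.
      (if emeasure P A = 0 then (if emeasure Q A = 0 then 0 else \<infinity>)
       else emeasure Q A / emeasure P A))"

end

theory Submission
  imports Defs "HOL-Real_Asymp.Real_Asymp"
begin

(*
  Both measures have continuous positive densities phi and f_r, so rho(N(0,1), t_r) is the
  supremum of phi/f_r.  Up to an additive constant, ln(phi/f_r) is (r+1)/2 ln(1 + x^2/r) - x^2/2,
  a concave function of x^2 maximised at x^2 = 1, hence ln rho = ln(phi(1)/f_r(1)).  With s = r/2,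
  twice this number is [ln s - 2 ln(Gamma(s + 1/2)/Gamma(s))] + [(r+1) ln(1 + 1/r) - 1], and both
  brackets lie between 1/(2(r+1)) and 1/(2r), the second one strictly.  The second bracket is
  controlled by elementary bounds on ln; the first is the sum over k of the concavity defects
  2 ln(s+k+1/2) - ln(s+k) - ln(s+k+1), each squeezed between two telescoping terms.
*)

lemma ln_less_half_diff_inverse:
  fixes x :: real assumes x: "x > 1"
  shows "ln x < (x - 1 / x) / 2"
proof -
  define f where "f u = (u - 1 / u) / 2 - ln u" for u :: real
  have "f 1 < f x"
  proof (rule DERIV_pos_imp_increasing_open[OF x])
    fix u :: real assume u: "1 < u" "u < x"
    have "(f has_real_derivative (u - 1)\<^sup>2 / (2 * u\<^sup>2)) (at u)"
      unfolding f_def using u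
      by (auto intro!: derivative_eq_intros simp: field_simps power2_eq_square)
    moreover have "(u - 1)\<^sup>2 / (2 * u\<^sup>2) > 0"
      using u by simp
    ultimately show "\<exists>y. (f has_real_derivative y) (at u) \<and> 0 < y"
      by blast
  next
    show "continuous_on {1..x} f"
      unfolding f_def by (intro continuous_intros) auto
  qed
  then show ?thesis
    by (simp add: f_def)
qed

lemma inverse_quadratic_less_ln:
  fixes x :: real assumes x: "x > 1"
  shows "3 / 2 - 2 / x + 1 / (2 * x\<^sup>2) < ln x"
proof -
  define f where "f u = ln u - (3 / 2 - 2 / u + 1 / (2 * u\<^sup>2))" for u :: real
  have "f 1 < f x"
  proof (rule DERIV_pos_imp_increasing_open[OF x])
    fix u :: real assume u: "1 < u" "u < x"
    have "(f has_real_derivative (u - 1)\<^sup>2 / u ^ 3) (at u)"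
      unfolding f_def using u
      by (auto intro!: derivative_eq_intros simp: field_simps power2_eq_square power3_eq_cube)
    moreover have "(u - 1)\<^sup>2 / u ^ 3 > 0"
      using u by simp
    ultimately show "\<exists>y. (f has_real_derivative y) (at u) \<and> 0 < y"
      by blast
  next
    show "continuous_on {1..x} f"
      unfolding f_def by (intro continuous_intros) auto
  qed
  then show ?thesis
    by (simp add: f_def)
qed

lemma ln_one_plus_inverse_bounds:
  fixes r :: real assumes r: "r > 0"
  shows "1 / (2 * (r + 1)) < (r + 1) * ln (1 + 1 / r) - 1"
    and "(r + 1) * ln (1 + 1 / r) - 1 < 1 / (2 * r)"
proof -
  have x: "1 + 1 / r > 1"
    using r by simp
  have "(r + 1) * (3 / 2 - 2 / (1 + 1 / r) + 1 / (2 * (1 + 1 / r)\<^sup>2)) - 1 = 1 / (2 * (r + 1))"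
    using r by (simp add: divide_simps) (simp add: algebra_simps power2_eq_square)
  with inverse_quadratic_less_ln[OF x] r
  show "1 / (2 * (r + 1)) < (r + 1) * ln (1 + 1 / r) - 1"
    by (smt (verit) mult_strict_left_mono)
  have "(r + 1) * ((1 + 1 / r - 1 / (1 + 1 / r)) / 2) - 1 = 1 / (2 * r)"
    using r by (simp add: divide_simps) (simp add: algebra_simps)
  with ln_less_half_diff_inverse[OF x] r
  show "(r + 1) * ln (1 + 1 / r) - 1 < 1 / (2 * r)"
    by (smt (verit) mult_strict_left_mono)
qed

lemma ln_one_plus_div_max_at_one:
  fixes r y :: real assumes r: "r > 0" and y: "y > - r"
  shows "(r + 1) * ln (1 + y / r) - y \<le> (r + 1) * ln (1 + 1 / r) - 1"
proof -
  have pos: "1 + y / r > 0" "1 + 1 / r > 0"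
    using r y by (simp_all add: field_simps add_pos_pos)
  have "ln (1 + y / r) - ln (1 + 1 / r) = ln ((1 + y / r) / (1 + 1 / r))"
    using pos by (simp add: ln_div)
  also have "\<dots> \<le> (1 + y / r) / (1 + 1 / r) - 1"
    using pos by (intro ln_le_minus_one) simp
  also have "\<dots> = (y - 1) / (r + 1)"
    using r by (simp add: divide_simps)
  finally have "(r + 1) * (ln (1 + y / r) - ln (1 + 1 / r)) \<le> y - 1"
    using r by (simp add: pos_le_divide_eq mult.commute)
  then show ?thesis
    by (simp add: algebra_simps)
qed

section \<open>The ratio of Gamma(s + 1/2) to Gamma(s)\<close>

definition ln_midpoint_gap :: "real \<Rightarrow> real" where
  "ln_midpoint_gap x = 2 * ln (x + 1/2) - ln x - ln (x + 1)"

lemma ln_midpoint_gap_eq: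
  fixes x :: real assumes "x > 0"
  shows "ln_midpoint_gap x = ln ((x + 1/2)\<^sup>2 / (x * (x + 1)))"
  using assms by (simp add: ln_midpoint_gap_def ln_div ln_mult ln_realpow)

lemma ln_midpoint_gap_le:
  fixes x :: real assumes "x > 0"
  shows "ln_midpoint_gap x \<le> 1 / (4 * x) - 1 / (4 * (x + 1))"
proof -
  have "ln_midpoint_gap x \<le> (x + 1/2)\<^sup>2 / (x * (x + 1)) - 1"
    using assms by (simp add: ln_midpoint_gap_eq ln_le_minus_one)
  also have "\<dots> = 1 / (4 * x) - 1 / (4 * (x + 1))"
    using assms by (simp add: divide_simps) (simp add: algebra_simps power2_eq_square)
  finally show ?thesis .
qed

lemma ln_midpoint_gap_ge:
  fixes x :: real assumes "x > 0"
  shows "1 / (2 * (2 * x + 1)) - 1 / (2 * (2 * x + 3)) \<le> ln_midpoint_gap x"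
proof -
  have "1 / (2 * (2 * x + 1)) - 1 / (2 * (2 * x + 3)) = 1 / ((2 * x + 1) * (2 * x + 3))"
    using assms by (simp add: divide_simps) (simp add: algebra_simps)
  also have "\<dots> \<le> 1 / (2 * x + 1)\<^sup>2"
    using assms by (intro divide_left_mono) (auto simp: power2_eq_square)
  also have "\<dots> = 1 - x * (x + 1) / (x + 1/2)\<^sup>2"
    using assms by (simp add: divide_simps) (simp add: algebra_simps power2_eq_square)
  also have "\<dots> \<le> - ln (x * (x + 1) / (x + 1/2)\<^sup>2)"
    using ln_le_minus_one[of "x * (x + 1) / (x + 1/2)\<^sup>2"] assms by simp
  also have "\<dots> = ln_midpoint_gap x"
    using assms by (simp add: ln_midpoint_gap_eq ln_div)
  finally show ?thesis .
qed

lemma ln_pochhammer_half_shift: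
  fixes s :: real assumes s: "s > 0"
  shows "ln (pochhammer s m) - ln (pochhammer (s + 1/2) m)
           = (ln s - ln (s + m)) / 2 - (\<Sum>k<m. ln_midpoint_gap (s + real k)) / 2"
proof -
  have "ln (pochhammer a m) = (\<Sum>k<m. ln (a + k))" if "a > 0" for a :: real
    using that by (simp add: pochhammer_prod ln_prod atLeast0LessThan add_pos_nonneg)
  then have "ln (pochhammer s m) - ln (pochhammer (s + 1/2) m)
               = (\<Sum>k<m. ln (s + k) - ln (s + k + 1/2))"
    using s by (simp add: sum_subtractf add_ac)
  also have "\<dots> = (\<Sum>k<m. (ln (s + k) - ln (s + Suc k)) / 2 - ln_midpoint_gap (s + k) / 2)"
    by (intro sum.cong) (simp_all add: ln_midpoint_gap_def add_ac field_simps)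
  also have "\<dots> = (ln s - ln (s + m)) / 2 - (\<Sum>k<m. ln_midpoint_gap (s + k)) / 2"
    using sum_lessThan_telescope'[of "\<lambda>k. ln (s + real k)" m]
    by (simp only: sum_subtractf sum_divide_distrib[symmetric]) simp
  finally show ?thesis .
qed

lemma ln_Gamma_series_half_shift:
  fixes s :: real assumes s: "s > 0" and n: "n > 0"
  shows "ln (Gamma_series (s + 1/2) n / Gamma_series s n)
           = ln s / 2 + (ln n - ln (s + n + 1)) / 2 - (\<Sum>k<Suc n. ln_midpoint_gap (s + real k)) / 2"
proof -
  have poch: "pochhammer s (n + 1) > 0" "pochhammer (s + 1/2) (n + 1) > 0"
    using s by (auto intro!: pochhammer_pos)
  have "Gamma_series (s + 1/2) n / Gamma_series s n
          = exp (ln n / 2) * (pochhammer s (n + 1) / pochhammer (s + 1/2) (n + 1))"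
    using poch by (simp add: Gamma_series_def field_simps exp_add[symmetric])
  then have "ln (Gamma_series (s + 1/2) n / Gamma_series s n)
               = ln n / 2 + (ln (pochhammer s (n + 1)) - ln (pochhammer (s + 1/2) (n + 1)))"
    using poch by (simp add: ln_mult ln_div)
  then show ?thesis
    using s by (simp add: ln_pochhammer_half_shift add_ac diff_divide_distrib)
qed

lemma sums_ln_midpoint_gap:
  fixes s :: real assumes s: "s > 0"
  shows "(\<lambda>k. ln_midpoint_gap (s + real k)) sums (ln s - 2 * (ln (Gamma (s + 1/2)) - ln (Gamma s)))"
proof -
  define G where "G m = (\<Sum>k<m. ln_midpoint_gap (s + real k))" for m
  have Gamma_pos: "Gamma s > 0" "Gamma (s + 1/2) > 0"
    using s by (auto intro!: Gamma_real_pos)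
  have "(\<lambda>n. Gamma_series (s + 1/2) n / Gamma_series s n) \<longlonglongrightarrow> Gamma (s + 1/2) / Gamma s"
    using Gamma_pos by (intro tendsto_intros) auto
  then have "(\<lambda>n. ln (Gamma_series (s + 1/2) n / Gamma_series s n))
               \<longlonglongrightarrow> ln (Gamma (s + 1/2) / Gamma s)"
    using Gamma_pos by (intro tendsto_intros) auto
  then have "(\<lambda>n. ln (Gamma_series (s + 1/2) n / Gamma_series s n))
               \<longlonglongrightarrow> ln (Gamma (s + 1/2)) - ln (Gamma s)"
    using Gamma_pos by (simp add: ln_div)
  moreover have "(\<lambda>n. ln (real n) - ln (s + real n + 1)) \<longlonglongrightarrow> 0"
    using s by real_asymp
  ultimately have "(\<lambda>n. ln s + (ln n - ln (s + n + 1)) - 2 * ln (Gamma_series (s + 1/2) n / Gamma_series s n))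
                     \<longlonglongrightarrow> ln s + 0 - 2 * (ln (Gamma (s + 1/2)) - ln (Gamma s))"
    by (intro tendsto_intros)
  moreover have "ln s + (ln n - ln (s + n + 1)) - 2 * ln (Gamma_series (s + 1/2) n / Gamma_series s n)
                   = G (Suc n)" if "n > 0" for n
    using ln_Gamma_series_half_shift[OF s that] unfolding G_def by argo
  then have "eventually (\<lambda>n. ln s + (ln n - ln (s + n + 1))
               - 2 * ln (Gamma_series (s + 1/2) n / Gamma_series s n) = G (Suc n)) sequentially"
    by (rule eventually_mono[OF eventually_gt_at_top])
  ultimately have "(\<lambda>n. G (Suc n)) \<longlonglongrightarrow> ln s - 2 * (ln (Gamma (s + 1/2)) - ln (Gamma s))"
    by (simp add: tendsto_cong)
  then show ?thesis
    unfolding sums_def G_def[symmetric] by (rule LIMSEQ_imp_Suc)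
qed

lemma ln_Gamma_half_shift_bounds:
  fixes s :: real assumes s: "s > 0"
  shows "ln s - 1 / (4 * s) \<le> 2 * (ln (Gamma (s + 1/2)) - ln (Gamma s))"
    and "2 * (ln (Gamma (s + 1/2)) - ln (Gamma s)) \<le> ln s - 1 / (2 * (2 * s + 1))"
proof -
  have "(\<lambda>k. 1 / (4 * (s + real k))) \<longlonglongrightarrow> 0"
    using s by real_asymp
  from telescope_sums'[OF this]
  have upper: "(\<lambda>k. 1 / (4 * (s + real k)) - 1 / (4 * (s + real k + 1))) sums (1 / (4 * s))"
    by (simp add: add_ac)
  have "ln_midpoint_gap (s + real k) \<le> 1 / (4 * (s + real k)) - 1 / (4 * (s + real k + 1))" for k
    using s by (intro ln_midpoint_gap_le) simp
  from sums_le[OF this sums_ln_midpoint_gap[OF s] upper]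
  show "ln s - 1 / (4 * s) \<le> 2 * (ln (Gamma (s + 1/2)) - ln (Gamma s))"
    by linarith
  have "(\<lambda>k. 1 / (2 * (2 * (s + real k) + 1))) \<longlonglongrightarrow> 0"
    using s by real_asymp
  from telescope_sums'[OF this]
  have lower: "(\<lambda>k. 1 / (2 * (2 * (s + real k) + 1)) - 1 / (2 * (2 * (s + real k) + 3)))
                 sums (1 / (2 * (2 * s + 1)))"
    by (simp add: add_ac)
  have "1 / (2 * (2 * (s + real k) + 1)) - 1 / (2 * (2 * (s + real k) + 3))
          \<le> ln_midpoint_gap (s + real k)" for k
    using s by (intro ln_midpoint_gap_ge) simp
  from sums_le[OF this lower sums_ln_midpoint_gap[OF s]]
  show "2 * (ln (Gamma (s + 1/2)) - ln (Gamma s)) \<le> ln s - 1 / (2 * (2 * s + 1))"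
    by linarith
qed

section \<open>The functional rho for measures with densities\<close>

lemma rho_density_le:
  fixes f g :: "'a \<Rightarrow> ennreal" and c :: ennreal
  assumes [measurable]: "f \<in> borel_measurable M" "g \<in> borel_measurable M"
    and le: "\<And>x. x \<in> space M \<Longrightarrow> g x \<le> c * f x"
  shows "rho (density M g) (density M f) \<le> c"
  unfolding rho_def
proof (rule SUP_least)
  fix A assume "A \<in> sets (density M g)"
  then have [measurable]: "A \<in> sets M"
    by simp
  have "emeasure (density M g) A = (\<integral>\<^sup>+x. g x * indicator A x \<partial>M)"
    by (rule emeasure_density) auto
  also have "\<dots> \<le> (\<integral>\<^sup>+x. c * (f x * indicator A x) \<partial>M)"
    by (intro nn_integral_mono) (auto simp: le split: split_indicator)
  also have "\<dots> = c * emeasure (density M f) A"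
    by (simp add: nn_integral_cmult emeasure_density)
  finally have "emeasure (density M g) A \<le> emeasure (density M f) A * c"
    by (simp add: mult.commute)
  then show "(if emeasure (density M f) A = 0 then if emeasure (density M g) A = 0 then 0 else \<infinity>
              else emeasure (density M g) A / emeasure (density M f) A) \<le> c"
    by (auto intro: divide_le_posI_ennreal simp: zero_less_iff_neq_zero)
qed

lemma emeasure_density_lborel_interval_pos:
  fixes h :: "real \<Rightarrow> real"
  assumes [measurable]: "h \<in> borel_measurable borel"
    and "a < b" and pos: "\<And>x. a < x \<Longrightarrow> x < b \<Longrightarrow> h x > 0"
  shows "emeasure (density lborel (\<lambda>x. ennreal (h x))) {a<..<b} \<noteq> 0"
proof
  assume "emeasure (density lborel (\<lambda>x. ennreal (h x))) {a<..<b} = 0"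
  then have "{a<..<b} \<in> null_sets (density lborel (\<lambda>x. ennreal (h x)))"
    by (simp add: null_sets_def)
  then have "AE x in lborel. x \<in> {a<..<b} \<longrightarrow> ennreal (h x) = 0"
    by (simp add: null_sets_density_iff)
  then have "AE x in lborel. x \<notin> {a<..<b}"
    by eventually_elim (auto dest: pos)
  then have "{a<..<b} \<in> null_sets lborel"
    by (subst AE_iff_null_sets) auto
  then have "emeasure lborel {a<..<b} = 0"
    by (rule null_setsD1)
  with \<open>a < b\<close> show False
    by simp
qed

lemma rho_ge_of_measure_ratio:
  fixes L :: ennreal
  assumes A: "A \<in> sets Q" and PA: "emeasure P A \<noteq> 0" and QA: "emeasure Q A \<noteq> \<infinity>"
    and LPQ: "L * emeasure P A \<le> emeasure Q A"
  shows "L \<le> rho Q P"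
proof (cases "L = 0")
  case False
  have "emeasure P A \<noteq> \<infinity>"
  proof
    assume "emeasure P A = \<infinity>"
    with LPQ False have "emeasure Q A = \<infinity>"
      by (simp add: top_unique)
    with QA show False ..
  qed
  then have "L = L * emeasure P A / emeasure P A"
    using PA by (simp add: ennreal_mult_divide_eq)
  also have "\<dots> \<le> emeasure Q A / emeasure P A"
    using LPQ by (rule divide_right_mono_ennreal)
  finally show ?thesis
    unfolding rho_def using A PA by (intro SUP_upper2[of A]) auto
qed simp

lemma emeasure_density_scaled_le:
  fixes f g :: "'a \<Rightarrow> real"
  assumes [measurable]: "f \<in> borel_measurable M" "g \<in> borel_measurable M" "A \<in> sets M"
    and "L \<ge> 0" and le: "\<And>x. x \<in> A \<Longrightarrow> L * f x \<le> g x"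
  shows "ennreal L * emeasure (density M (\<lambda>x. ennreal (f x))) A
           \<le> emeasure (density M (\<lambda>x. ennreal (g x))) A"
proof -
  have "ennreal L * emeasure (density M (\<lambda>x. ennreal (f x))) A
          = (\<integral>\<^sup>+x. ennreal (L * f x) * indicator A x \<partial>M)"
    using \<open>L \<ge> 0\<close> by (simp add: emeasure_density nn_integral_cmult[symmetric] ennreal_mult' mult.assoc)
  also have "\<dots> \<le> (\<integral>\<^sup>+x. ennreal (g x) * indicator A x \<partial>M)"
    using le by (intro nn_integral_mono) (auto intro!: ennreal_leI split: split_indicator)
  also have "\<dots> = emeasure (density M (\<lambda>x. ennreal (g x))) A"
    by (simp add: emeasure_density)
  finally show ?thesis .
qed

lemma rho_density_lborel_ge:
  fixes f g :: "real \<Rightarrow> real"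
  assumes [measurable]: "f \<in> borel_measurable borel" "g \<in> borel_measurable borel"
    and cont: "isCont f x\<^sub>0" "isCont g x\<^sub>0" and pos: "f x\<^sub>0 > 0"
    and fin: "finite_measure (density lborel (\<lambda>x. ennreal (g x)))"
  shows "ennreal (g x\<^sub>0 / f x\<^sub>0) \<le> rho (density lborel (\<lambda>x. ennreal (g x))) (density lborel (\<lambda>x. ennreal (f x)))"
    (is "_ \<le> rho ?Q ?P")
proof (rule dense_le)
  fix y assume "y < ennreal (g x\<^sub>0 / f x\<^sub>0)"
  then obtain L where y: "y = ennreal L" and L: "0 \<le> L" "L < g x\<^sub>0 / f x\<^sub>0"
    by (cases y) (auto simp: ennreal_less_iff)
  have f_lim: "(f \<longlongrightarrow> f x\<^sub>0) (at_right x\<^sub>0)" and "(g \<longlongrightarrow> g x\<^sub>0) (at_right x\<^sub>0)"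
    using cont by (simp_all add: isCont_def filterlim_at_split)
  then have "((\<lambda>x. g x - L * f x) \<longlongrightarrow> g x\<^sub>0 - L * f x\<^sub>0) (at_right x\<^sub>0)"
    by (intro tendsto_intros)
  moreover have "g x\<^sub>0 - L * f x\<^sub>0 > 0"
    using L pos by (simp add: field_simps)
  ultimately have "eventually (\<lambda>x. g x - L * f x > 0) (at_right x\<^sub>0)"
    by (rule order_tendstoD(1))
  then have "eventually (\<lambda>x. L * f x < g x \<and> f x > 0) (at_right x\<^sub>0)"
    using order_tendstoD(1)[OF f_lim pos] by eventually_elim simp
  then obtain b where "b > x\<^sub>0" and b: "\<And>x. x\<^sub>0 < x \<Longrightarrow> x < b \<Longrightarrow> L * f x < g x \<and> f x > 0"
    by (auto simp: eventually_at_right_field)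
  show "y \<le> rho ?Q ?P"
    unfolding y
  proof (rule rho_ge_of_measure_ratio)
    show "{x\<^sub>0<..<b} \<in> sets ?Q"
      by simp
    show "emeasure ?P {x\<^sub>0<..<b} \<noteq> 0"
      using \<open>b > x\<^sub>0\<close> b by (intro emeasure_density_lborel_interval_pos) auto
    show "emeasure ?Q {x\<^sub>0<..<b} \<noteq> \<infinity>"
      using fin by (simp add: finite_measure.emeasure_finite)
    show "ennreal L * emeasure ?P {x\<^sub>0<..<b} \<le> emeasure ?Q {x\<^sub>0<..<b}"
      using L b by (intro emeasure_density_scaled_le) (auto simp: less_imp_le)
  qed
qed

lemma rho_density_lborel_eq:
  fixes f g :: "real \<Rightarrow> real"
  assumes [measurable]: "f \<in> borel_measurable borel" "g \<in> borel_measurable borel"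
    and "isCont f x\<^sub>0" "isCont g x\<^sub>0" "f x\<^sub>0 > 0" "\<And>x. f x \<ge> 0"
    and "finite_measure (density lborel (\<lambda>x. ennreal (g x)))"
    and "\<And>x. g x \<le> g x\<^sub>0 / f x\<^sub>0 * f x"
  shows "rho (density lborel (\<lambda>x. ennreal (g x))) (density lborel (\<lambda>x. ennreal (f x)))
           = ennreal (g x\<^sub>0 / f x\<^sub>0)"
proof (rule antisym)
  show "rho (density lborel (\<lambda>x. ennreal (g x))) (density lborel (\<lambda>x. ennreal (f x)))
          \<le> ennreal (g x\<^sub>0 / f x\<^sub>0)"
    using assms by (intro rho_density_le) (auto simp: ennreal_mult''[symmetric] intro: ennreal_leI)
  show "ennreal (g x\<^sub>0 / f x\<^sub>0)
          \<le> rho (density lborel (\<lambda>x. ennreal (g x))) (density lborel (\<lambda>x. ennreal (f x)))"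
    using assms by (intro rho_density_lborel_ge) auto
qed

lemma ln_std_normal_density: "ln (std_normal_density x) = - ln (2 * pi) / 2 - x\<^sup>2 / 2"
  by (simp add: std_normal_density_def ln_div ln_sqrt)

context
  fixes r :: real assumes r: "r > 0"
begin

private lemma student_t_density_factors_pos:
  "Gamma ((r + 1) / 2) > 0" "Gamma (r / 2) > 0" "1 + x\<^sup>2 / r > 0"
  using r by (simp_all add: Gamma_real_pos add_pos_nonneg)

private lemmas student_t_density_factors_nonzero =
  student_t_density_factors_pos[THEN less_imp_neq, THEN not_sym]

lemma student_t_density_pos: "student_t_density r x > 0"
  unfolding student_t_density_def using r student_t_density_factors_pos student_t_density_factors_nonzero
  by (intro mult_pos_pos divide_pos_pos) simp_all

lemma ln_student_t_density:
  "ln (student_t_density r x)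
     = ln (Gamma ((r + 1) / 2)) - ln (Gamma (r / 2)) - ln (r * pi) / 2 - (r + 1) / 2 * ln (1 + x\<^sup>2 / r)"
  using r student_t_density_factors_pos student_t_density_factors_nonzero
  by (simp add: student_t_density_def ln_mult ln_div ln_sqrt ln_powr)
    (simp add: algebra_simps)

lemma isCont_student_t_density: "isCont (student_t_density r) x"
proof -
  have "isCont (\<lambda>x. (1 + x\<^sup>2 / r) powr (- (r + 1) / 2)) x"
    using student_t_density_factors_nonzero by (intro continuous_intros) auto
  then show ?thesis
    unfolding student_t_density_def[abs_def] by (rule continuous_mult[OF continuous_const])
qed

end

lemma borel_measurable_student_t_density: "student_t_density r \<in> borel_measurable borel"
  unfolding student_t_density_def[abs_def] by measurable

lemma std_normal_le_student_t_scaled: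
  fixes r :: real assumes r: "r > 0"
  shows "std_normal_density x \<le> std_normal_density 1 / student_t_density r 1 * student_t_density r x"
proof -
  have pos: "student_t_density r x > 0" "student_t_density r 1 > 0"
    "std_normal_density x > 0" "std_normal_density 1 > 0"
    using r by (simp_all add: student_t_density_pos std_normal_density_def)
  have "(r + 1) * ln (1 + x\<^sup>2 / r) - x\<^sup>2 \<le> (r + 1) * ln (1 + 1 / r) - 1"
    using r by (intro ln_one_plus_div_max_at_one) (auto intro: less_le_trans[of _ 0])
  then have "ln (std_normal_density x) - ln (student_t_density r x)
               \<le> ln (std_normal_density 1) - ln (student_t_density r 1)"
    using r by (simp add: ln_std_normal_density ln_student_t_density algebra_simps) argo
  then have "ln (std_normal_density x / student_t_density r x)
               \<le> ln (std_normal_density 1 / student_t_density r 1)"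
    using pos by (simp add: ln_div)
  then have "std_normal_density x / student_t_density r x \<le> std_normal_density 1 / student_t_density r 1"
    using pos by simp
  then show ?thesis
    using pos by (simp add: divide_le_eq)
qed

lemma ln_std_normal_over_student_t_at_one:
  fixes r :: real assumes r: "r > 0"
  shows "2 * ln (std_normal_density 1 / student_t_density r 1)
           = ln (r / 2) - 2 * (ln (Gamma (r / 2 + 1 / 2)) - ln (Gamma (r / 2)))
             + ((r + 1) * ln (1 + 1 / r) - 1)"
proof -
  have "student_t_density r 1 > 0" "std_normal_density 1 > 0"
    using r by (simp_all add: student_t_density_pos std_normal_density_def)
  then have "ln (std_normal_density 1 / student_t_density r 1)
               = ln (std_normal_density 1) - ln (student_t_density r 1)"
    by (simp add: ln_div)
  moreover have "ln (r * pi) - ln (2 * pi) = ln (r / 2)"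
    using r by (simp add: ln_mult ln_div)
  moreover have "(r + 1) / 2 = r / 2 + 1 / 2"
    by simp
  ultimately show ?thesis
    using r by (simp add: ln_std_normal_density ln_student_t_density) argo
qed

lemma ln_std_normal_over_student_t_at_one_bounds:
  fixes r :: real assumes r: "r > 0"
  shows "1 / (2 * (r + 1)) < ln (std_normal_density 1 / student_t_density r 1)"
    and "ln (std_normal_density 1 / student_t_density r 1) < 1 / (2 * r)"
proof -
  have "r / 2 > 0"
    using r by simp
  note Gamma_bounds = ln_Gamma_half_shift_bounds[OF this]
  have "1 / (4 * (r / 2)) = 1 / (2 * r)" "1 / (2 * (2 * (r / 2) + 1)) = 1 / (2 * (r + 1))"
    by simp_all
  with Gamma_bounds ln_std_normal_over_student_t_at_one[OF r] ln_one_plus_inverse_bounds[OF r]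
  show "1 / (2 * (r + 1)) < ln (std_normal_density 1 / student_t_density r 1)"
    and "ln (std_normal_density 1 / student_t_density r 1) < 1 / (2 * r)"
    by linarith+
qed

theorem lemma8:
  fixes r :: real
  assumes "r \<ge> 2"
  shows "\<exists>c. rho std_normal (student_t r) = ennreal c \<and>
           1 / (2 * (r + 1)) < ln c \<and> ln c < 1 / (2 * r)"
proof -
  have r: "r > 0"
    using assms by simp
  have "rho std_normal (student_t r) = ennreal (std_normal_density 1 / student_t_density r 1)"
    unfolding std_normal_def student_t_def
  proof (rule rho_density_lborel_eq)
    show "finite_measure (density lborel (\<lambda>x. ennreal (std_normal_density x)))"
      by (rule prob_space.axioms(1)[OF prob_space_normal_density]) simp
    show "isCont std_normal_density 1"
      unfolding normal_density_def[abs_def] by (intro continuous_intros) simp_all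
    show "std_normal_density x \<le> std_normal_density 1 / student_t_density r 1 * student_t_density r x" for x
      using r by (rule std_normal_le_student_t_scaled)
  qed (use r in \<open>auto simp: borel_measurable_student_t_density isCont_student_t_density
      student_t_density_pos less_imp_le\<close>)
  with ln_std_normal_over_student_t_at_one_bounds[OF r] show ?thesis
    by blast
qed

end
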